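(* Any quantum algorithm that estimates the non-linearity $\eta(f)$ of a given Boolean function $f$ (given as an oracle) to within additive accuracy $\lambda$ uses $\Omega(1/\lambda)$ queries.
   Context: For $f:\{0,1\}^n\to\{0,1\}$, the Walsh–Hadamard coefficient at $a$ is $\hat f(a)=\frac{1}{2^n}\sum_{x}(-1)^{f(x)\oplus a\cdot x}$, $\hat f_{max}=\max_a|\hat f(a)|$, and the non-linearity is $\eta(f)=\frac12-\frac12\hat f_{max}$. The lower bound is for bounded-error algorithms that must succeed on every $f$; queries are calls to the oracle for $f$. *)

theory Defs
  imports Complex_Main
begin

text \<open>A Boolean function on n bits is modelled as f :: nat => bool, where only the
values on inputs x < 2^n (identified with bit strings via their binary expansion)
matter.\<close>

definition dotp :: "nat \<Rightarrow> nat \<Rightarrow> nat \<Rightarrow> bool" where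
  "dotp n a x = odd (card {i. i < n \<and> bit a i \<and> bit x i})"

definition walsh :: "nat \<Rightarrow> (nat \<Rightarrow> bool) \<Rightarrow> nat \<Rightarrow> real" where
  "walsh n f a = (1 / 2 ^ n) * (\<Sum>x<2^n. (if f x \<noteq> dotp n a x then -1 else 1))"

definition walsh_max :: "nat \<Rightarrow> (nat \<Rightarrow> bool) \<Rightarrow> real" where
  "walsh_max n f = Max ((\<lambda>a. \<bar>walsh n f a\<bar>) ` {..<2^n})"

definition nonlinearity :: "nat \<Rightarrow> (nat \<Rightarrow> bool) \<Rightarrow> real" where
  "nonlinearity n f = 1/2 - 1/2 * walsh_max n f"

text \<open>Computational basis states: (x, b, w) with x < 2^n the query register,
b the answer qubit, w < m the workspace.  Operators are matrices indexed by basis states.\<close>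

type_synonym qbasis = "nat \<times> bool \<times> nat"
type_synonym qstate = "qbasis \<Rightarrow> complex"
type_synonym qop = "qbasis \<Rightarrow> qbasis \<Rightarrow> complex"

definition basis_set :: "nat \<Rightarrow> nat \<Rightarrow> qbasis set" where
  "basis_set n m = {..<2^n} \<times> UNIV \<times> {..<m}"

definition apply_op :: "nat \<Rightarrow> nat \<Rightarrow> qop \<Rightarrow> qstate \<Rightarrow> qstate" where
  "apply_op n m U \<psi> = (\<lambda>i. if i \<in> basis_set n m then (\<Sum>j\<in>basis_set n m. U i j * \<psi> j) else 0)"

definition unitary_on :: "qbasis set \<Rightarrow> qop \<Rightarrow> bool" where
  "unitary_on S U \<longleftrightarrow>
     (\<forall>i\<in>S. \<forall>j\<in>S. (\<Sum>k\<in>S. cnj (U k i) * U k j) = (if i = j then 1 else 0))"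

definition query_op :: "(nat \<Rightarrow> bool) \<Rightarrow> qop" where
  "query_op f = (\<lambda>(x, b, w) (x', b', w'). if x = x' \<and> w = w' \<and> b = (b' \<noteq> f x') then 1 else 0)"

definition init_state :: qstate where
  "init_state = (\<lambda>i. if i = (0, False, 0) then 1 else 0)"

fun run :: "nat \<Rightarrow> nat \<Rightarrow> (nat \<Rightarrow> qop) \<Rightarrow> (nat \<Rightarrow> bool) \<Rightarrow> nat \<Rightarrow> qstate" where
  "run n m Us f 0 = apply_op n m (Us 0) init_state"
| "run n m Us f (Suc k) = apply_op n m (Us (Suc k)) (apply_op n m (query_op f) (run n m Us f k))"

definition success_prob ::
  "nat \<Rightarrow> nat \<Rightarrow> (nat \<Rightarrow> qop) \<Rightarrow> (qbasis \<Rightarrow> real) \<Rightarrow> (nat \<Rightarrow> bool) \<Rightarrow> nat \<Rightarrow> real \<Rightarrow> real \<Rightarrow> real" where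
  "success_prob n m Us out f T target lam =
     (\<Sum>s\<in>basis_set n m. if \<bar>out s - target\<bar> \<le> lam then (cmod (run n m Us f T s))^2 else 0)"

end

(* A function of Hamming weight K <= 2^n/4 has non-linearity exactly K/2^n: its Walsh
   coefficient at 0 is 1 - 2K/2^n, and every other coefficient is at most 2K/2^n in
   absolute value because the nontrivial characters sum to zero.

   Split the inputs into M = 2^r residue classes mod M and let f_S indicate the classes
   in S.  For |S| = k and z not in S, the non-linearities of f_S and f_(S+z) differ by
   1/M > 2 lam, so an algorithm succeeding with probability 2/3 on both ends in final
   states whose inner product is at most 17/18.  Sum these inner products over all such
   pairs (S, z) (the unweighted adversary method): the sum starts at the number of pairs,
   and one query lowers it by at most the query mass spent on the classes where the two
   functions differ, which totals at most the number of k-sets plus the number of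
   (k+1)-sets.  Counting pairs in both ways gives T >= (k+1)/36, and k + 1 = M/4 is of
   order 1/lam. *)

theory Submission
  imports Defs
begin

section \<open>Walsh spectrum of functions of small weight\<close>

definition hamming_weight :: "nat \<Rightarrow> (nat \<Rightarrow> bool) \<Rightarrow> nat" where
  "hamming_weight n f = card {x. x < 2 ^ n \<and> f x}"

lemma flip_bit_less_power2:
  fixes x :: nat
  assumes "x < 2 ^ n" "i < n"
  shows "flip_bit i x < 2 ^ n"
  using assms take_bit_flip_bit_eq[of n i x] by (metis not_le take_bit_nat_eq_self_iff)

lemma flip_bit_flip_bit_nat: "flip_bit i (flip_bit i x) = (x :: nat)"
  by (rule bit_eqI) (auto simp: bit_flip_bit_iff)

lemma dotp_flip_bit:
  assumes "i < n" "bit a i"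
  shows "dotp n a (flip_bit i x) \<longleftrightarrow> \<not> dotp n a x"
proof -
  let ?A = "{j. j < n \<and> bit a j \<and> bit x j}"
  have flipped: "{j. j < n \<and> bit a j \<and> bit (flip_bit i x) j} =
      (if bit x i then ?A - {i} else insert i ?A)"
    using assms by (auto simp: bit_flip_bit_iff possible_bit_def)
  have "i \<in> ?A \<longleftrightarrow> bit x i" using assms by simp
  then have "card ?A = Suc (card (?A - {i}))" if "bit x i"
    using that card.remove[of ?A i] by simp
  then show ?thesis
    unfolding dotp_def flipped by (cases "bit x i") simp_all
qed

lemma ex_bit_less_if_nonzero:
  fixes a :: nat
  assumes "a < 2 ^ n" "a \<noteq> 0"
  shows "\<exists>i<n. bit a i"
proof (rule ccontr)
  assume "\<not> ?thesis"
  then have "\<And>i. \<not> bit a i"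
    using assms(1) by (metis bit_take_bit_iff take_bit_nat_eq_self_iff)
  then show False
    using assms(2) by (simp add: bit_eq_iff)
qed

lemma sum_character_eq_0:
  assumes "a < 2 ^ n" "a \<noteq> 0"
  shows "(\<Sum>x<2 ^ n. if dotp n a x then -1 else 1 :: real) = 0"
proof -
  obtain i where i: "i < n" "bit a i"
    using ex_bit_less_if_nonzero[OF assms] by blast
  let ?\<chi> = "\<lambda>x. if dotp n a x then -1 else 1 :: real"
  have "bij_betw (flip_bit i) {..<(2::nat) ^ n} {..<2 ^ n}"
    by (rule bij_betw_byWitness[where f' = "flip_bit i"])
      (auto simp: flip_bit_less_power2 i flip_bit_flip_bit_nat)
  then have "(\<Sum>x<2 ^ n. ?\<chi> x) = (\<Sum>x<2 ^ n. ?\<chi> (flip_bit i x))"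
    by (rule sum.reindex_bij_betw[symmetric])
  also have "\<dots> = - (\<Sum>x<2 ^ n. ?\<chi> x)"
    unfolding sum_negf[symmetric] by (rule sum.cong) (auto simp: dotp_flip_bit i)
  finally show ?thesis by simp
qed

lemma sum_indicator_eq_card:
  "finite A \<Longrightarrow> (\<Sum>x\<in>A. if P x then 1 else 0 :: real) = real (card {x\<in>A. P x})"
  using sum.inter_filter[of A "\<lambda>_. 1 :: real" P] by simp

lemma walsh_0_eq:
  "walsh n f 0 = 1 - 2 * real (hamming_weight n f) / 2 ^ n"
proof -
  have "(\<Sum>x<(2::nat) ^ n. if f x \<noteq> dotp n 0 x then -1 else 1 :: real)
      = (\<Sum>x<(2::nat) ^ n. 1 - 2 * (if f x then 1 else 0))"
    by (rule sum.cong) (auto simp: dotp_def)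
  also have "\<dots> = 2 ^ n - 2 * real (hamming_weight n f)"
    by (simp add: sum_subtractf flip: sum_distrib_left)
      (simp add: sum_indicator_eq_card hamming_weight_def lessThan_def)
  finally show ?thesis
    unfolding walsh_def by (simp add: field_simps)
qed

lemma abs_walsh_le_weight:
  assumes "a < 2 ^ n" "a \<noteq> 0"
  shows "\<bar>walsh n f a\<bar> \<le> 2 * real (hamming_weight n f) / 2 ^ n"
proof -
  let ?\<chi> = "\<lambda>x. if dotp n a x then -1 else 1 :: real"
  let ?F = "{x. x < (2::nat) ^ n \<and> f x}"
  have "(\<Sum>x<(2::nat) ^ n. if f x \<noteq> dotp n a x then -1 else 1 :: real)
      = (\<Sum>x<(2::nat) ^ n. ?\<chi> x) - 2 * (\<Sum>x<(2::nat) ^ n. if f x then ?\<chi> x else 0)"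
    unfolding sum_distrib_left sum_subtractf[symmetric] by (rule sum.cong) auto
  also have "(\<Sum>x<(2::nat) ^ n. if f x then ?\<chi> x else 0) = (\<Sum>x\<in>?F. ?\<chi> x)"
    using sum.inter_filter[of "{..<(2::nat) ^ n}" ?\<chi> f] by (simp add: lessThan_def)
  finally have "2 ^ n * walsh n f a = - 2 * (\<Sum>x\<in>?F. ?\<chi> x)"
    unfolding walsh_def using sum_character_eq_0[OF assms] by simp
  moreover have "\<bar>\<Sum>x\<in>?F. ?\<chi> x\<bar> \<le> (\<Sum>x\<in>?F. \<bar>?\<chi> x\<bar>)"
    by (rule sum_abs)
  moreover have "(\<Sum>x\<in>?F. \<bar>?\<chi> x\<bar>) = real (card ?F)"
    by (simp add: if_distrib cong: if_cong)
  ultimately show ?thesis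
    unfolding hamming_weight_def by (simp add: abs_mult field_simps)
qed

lemma nonlinearity_eq_weight:
  assumes "4 * hamming_weight n f \<le> 2 ^ n"
  shows "nonlinearity n f = real (hamming_weight n f) / 2 ^ n"
proof -
  let ?K = "real (hamming_weight n f)"
  have K: "4 * ?K \<le> 2 ^ n"
    using assms by (metis of_nat_le_iff of_nat_mult of_nat_numeral of_nat_power)
  have walsh_0: "\<bar>walsh n f 0\<bar> = 1 - 2 * ?K / 2 ^ n"
    unfolding walsh_0_eq using K by (simp add: field_simps)
  have "\<bar>walsh n f a\<bar> \<le> 1 - 2 * ?K / 2 ^ n" if "a < 2 ^ n" for a
  proof (cases "a = 0")
    case False
    then have "\<bar>walsh n f a\<bar> \<le> 2 * ?K / 2 ^ n"
      using abs_walsh_le_weight that by blast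
    also have "\<dots> \<le> 1 - 2 * ?K / 2 ^ n"
      using K by (simp add: field_simps)
    finally show ?thesis .
  qed (use walsh_0 in simp)
  then have "walsh_max n f = 1 - 2 * ?K / 2 ^ n"
    unfolding walsh_max_def
    by (intro Max_eqI) (auto intro!: image_eqI[where x = 0] simp flip: walsh_0)
  then show ?thesis
    unfolding nonlinearity_def by (simp add: field_simps)
qed

section \<open>Query algorithms\<close>

definition qinner :: "nat \<Rightarrow> nat \<Rightarrow> qstate \<Rightarrow> qstate \<Rightarrow> complex" where
  "qinner n m \<psi> \<phi> = (\<Sum>s\<in>basis_set n m. cnj (\<psi> s) * \<phi> s)"

definition query_mass :: "nat \<Rightarrow> qstate \<Rightarrow> nat \<Rightarrow> real" where
  "query_mass m \<psi> x = (\<Sum>b\<in>UNIV. \<Sum>w<m. (cmod (\<psi> (x, b, w)))\<^sup>2)"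

lemma finite_basis_set [simp]: "finite (basis_set n m)"
  unfolding basis_set_def by simp

lemma sum_basis_set:
  "(\<Sum>s\<in>basis_set n m. h s) = (\<Sum>x<2 ^ n. \<Sum>b\<in>UNIV. \<Sum>w<m. h (x, b, w))"
  unfolding basis_set_def by (simp add: sum.cartesian_product)

lemma qinner_self: "qinner n m \<psi> \<psi> = of_real (\<Sum>s\<in>basis_set n m. (cmod (\<psi> s))\<^sup>2)"
  unfolding qinner_def of_real_sum complex_norm_square by (simp add: mult.commute)

lemma sum_query_mass:
  "(\<Sum>x<2 ^ n. query_mass m \<psi> x) = (\<Sum>s\<in>basis_set n m. (cmod (\<psi> s))\<^sup>2)"
  unfolding query_mass_def sum_basis_set ..

lemma query_mass_nonneg: "0 \<le> query_mass m \<psi> x"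
  unfolding query_mass_def by (intro sum_nonneg) simp

lemma query_op_eq:
  "query_op f (x, b, w) s = (if s = (x, b \<noteq> f x, w) then 1 else 0)"
proof -
  obtain x' b' w' where s: "s = (x', b', w')"
    by (cases s)
  have "(x = x' \<and> w = w' \<and> b = (b' \<noteq> f x')) \<longleftrightarrow> s = (x, b \<noteq> f x, w)"
    unfolding s by blast
  then show ?thesis
    unfolding query_op_def s prod.case by (simp only:)
qed

lemma apply_query_op:
  assumes "(x, b, w) \<in> basis_set n m"
  shows "apply_op n m (query_op f) \<psi> (x, b, w) = \<psi> (x, b \<noteq> f x, w)"
proof -
  have "query_op f (x, b, w) s * \<psi> s = (if s = (x, b \<noteq> f x, w) then \<psi> s else 0)" for s
    by (simp add: query_op_eq)
  moreover have "(x, b \<noteq> f x, w) \<in> basis_set n m"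
    using assms by (simp add: basis_set_def)
  ultimately show ?thesis
    using assms by (simp add: apply_op_def)
qed

lemma qinner_apply_unitary:
  assumes "unitary_on (basis_set n m) U"
  shows "qinner n m (apply_op n m U \<psi>) (apply_op n m U \<phi>) = qinner n m \<psi> \<phi>"
proof -
  let ?B = "basis_set n m"
  have "qinner n m (apply_op n m U \<psi>) (apply_op n m U \<phi>)
      = (\<Sum>i\<in>?B. (\<Sum>j\<in>?B. cnj (U i j * \<psi> j)) * (\<Sum>k\<in>?B. U i k * \<phi> k))"
    unfolding qinner_def apply_op_def cnj_sum by (rule sum.cong) auto
  also have "\<dots> = (\<Sum>i\<in>?B. \<Sum>j\<in>?B. \<Sum>k\<in>?B. cnj (\<psi> j) * \<phi> k * (cnj (U i j) * U i k))"
    unfolding sum_product by (intro sum.cong refl) (simp add: mult_ac)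
  also have "\<dots> = (\<Sum>j\<in>?B. \<Sum>k\<in>?B. cnj (\<psi> j) * \<phi> k * (\<Sum>i\<in>?B. cnj (U i j) * U i k))"
    unfolding sum_distrib_left by (subst sum.swap) (intro sum.cong refl sum.swap)
  also have "\<dots> = (\<Sum>j\<in>?B. \<Sum>k\<in>?B. if k = j then cnj (\<psi> j) * \<phi> k else 0)"
    using assms unfolding unitary_on_def by (intro sum.cong refl) auto
  also have "\<dots> = (\<Sum>j\<in>?B. cnj (\<psi> j) * \<phi> j)"
    by (simp add: sum.delta')
  finally show ?thesis
    unfolding qinner_def .
qed

lemma sum_bool_neq:
  fixes h :: "bool \<Rightarrow> 'a :: comm_monoid_add" and c :: bool
  shows "(\<Sum>b\<in>UNIV. h (b \<noteq> c)) = (\<Sum>b\<in>UNIV. h b)"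
  by (cases c) (simp_all add: UNIV_bool add.commute)

lemma norm_cnj_mult_le:
  assumes "0 < \<beta>"
  shows "cmod (cnj u * v) \<le> (\<beta> * (cmod u)\<^sup>2 + (cmod v)\<^sup>2 / \<beta>) / 2"
proof -
  have "0 \<le> (\<beta> * cmod u - cmod v)\<^sup>2 / \<beta>"
    using assms by simp
  also have "\<dots> = \<beta> * (cmod u)\<^sup>2 - 2 * cmod u * cmod v + (cmod v)\<^sup>2 / \<beta>"
    using assms by (simp add: power2_diff field_simps power2_eq_square)
  finally show ?thesis
    by (simp add: norm_mult)
qed

lemma norm_sum_cnj_mult_le:
  assumes "0 < \<beta>"
  shows "cmod (\<Sum>s\<in>A. cnj (u s) * v s)
    \<le> (\<beta> * (\<Sum>s\<in>A. (cmod (u s))\<^sup>2) + (\<Sum>s\<in>A. (cmod (v s))\<^sup>2) / \<beta>) / 2"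
proof -
  have "cmod (\<Sum>s\<in>A. cnj (u s) * v s) \<le> (\<Sum>s\<in>A. (\<beta> * (cmod (u s))\<^sup>2 + (cmod (v s))\<^sup>2 / \<beta>) / 2)"
    using norm_cnj_mult_le[OF assms] by (intro order.trans[OF norm_sum] sum_mono)
  then show ?thesis
    by (simp add: sum.distrib sum_distrib_left sum_divide_distrib add_divide_distrib)
qed

lemma norm_sum_cnj_mult_le_if_separated:
  assumes "finite B" "A \<subseteq> B"
    and "(\<Sum>s\<in>B. (cmod (\<psi> s))\<^sup>2) = 1" "(\<Sum>s\<in>B. (cmod (\<phi> s))\<^sup>2) = 1"
    and "(\<Sum>s\<in>A. (cmod (\<psi> s))\<^sup>2) \<ge> 2/3" "(\<Sum>s\<in>B - A. (cmod (\<phi> s))\<^sup>2) \<ge> 2/3"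
  shows "cmod (\<Sum>s\<in>B. cnj (\<psi> s) * \<phi> s) \<le> 17/18"
proof -
  have split: "(\<Sum>s\<in>B. h s) = (\<Sum>s\<in>A. h s) + (\<Sum>s\<in>B - A. h s)" for h :: "_ \<Rightarrow> 'b :: comm_monoid_add"
    using sum.subset_diff[OF assms(2,1)] by (simp add: add.commute)
  have "cmod (\<Sum>s\<in>B. cnj (\<psi> s) * \<phi> s)
      \<le> cmod (\<Sum>s\<in>A. cnj (\<psi> s) * \<phi> s) + cmod (\<Sum>s\<in>B - A. cnj (\<psi> s) * \<phi> s)"
    unfolding split by (rule norm_triangle_ineq)
  \<comment> \<open>weights 2/3 on A and 3/2 off A; the result is 17/18 exactly when both masses are 2/3\<close>
  also have "\<dots> \<le> (2/3 * (\<Sum>s\<in>A. (cmod (\<psi> s))\<^sup>2) + (\<Sum>s\<in>A. (cmod (\<phi> s))\<^sup>2) / (2/3)) / 2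
      + (3/2 * (\<Sum>s\<in>B - A. (cmod (\<psi> s))\<^sup>2) + (\<Sum>s\<in>B - A. (cmod (\<phi> s))\<^sup>2) / (3/2)) / 2"
    by (intro add_mono norm_sum_cnj_mult_le) simp_all
  also have "\<dots> \<le> 17/18"
    using assms(3-6) unfolding split by (simp add: field_simps)
  finally show ?thesis .
qed

lemma sum_flip_diff_eq_0:
  fixes p q :: "bool \<Rightarrow> nat \<Rightarrow> complex"
  shows "(\<Sum>b\<in>UNIV. \<Sum>w<m. cnj (p (b \<noteq> c) w) * q (b \<noteq> c) w - cnj (p b w) * q b w) = 0"
  using sum_bool_neq[of "\<lambda>b. \<Sum>w<m. cnj (p b w) * q b w" c] by (simp add: sum_subtractf)

lemma norm_sum_flip_diff_le:
  fixes p q :: "bool \<Rightarrow> nat \<Rightarrow> complex"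
  shows "cmod (\<Sum>b\<in>UNIV. \<Sum>w<m. cnj (p (b \<noteq> c) w) * q (b \<noteq> d) w - cnj (p b w) * q b w)
     \<le> (\<Sum>b\<in>UNIV. \<Sum>w<m. (cmod (p b w))\<^sup>2) + (\<Sum>b\<in>UNIV. \<Sum>w<m. (cmod (q b w))\<^sup>2)"
proof -
  let ?P = "\<lambda>b. \<Sum>w<m. (cmod (p b w))\<^sup>2"
  let ?Q = "\<lambda>b. \<Sum>w<m. (cmod (q b w))\<^sup>2"
  have "cmod (\<Sum>b\<in>UNIV. \<Sum>w<m. cnj (p (b \<noteq> c) w) * q (b \<noteq> d) w - cnj (p b w) * q b w)
      \<le> (\<Sum>b\<in>UNIV. \<Sum>w<m. cmod (cnj (p (b \<noteq> c) w) * q (b \<noteq> d) w) + cmod (cnj (p b w) * q b w))"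
    by (intro order.trans[OF norm_sum] sum_mono norm_triangle_ineq4)
  also have "\<dots> \<le> (\<Sum>b\<in>UNIV. \<Sum>w<m. ((cmod (p (b \<noteq> c) w))\<^sup>2 + (cmod (q (b \<noteq> d) w))\<^sup>2) / 2
                                     + ((cmod (p b w))\<^sup>2 + (cmod (q b w))\<^sup>2) / 2)"
    using norm_cnj_mult_le[of 1] by (intro sum_mono add_mono) simp_all
  also have "\<dots> = ((\<Sum>b\<in>UNIV. ?P (b \<noteq> c)) + (\<Sum>b\<in>UNIV. ?Q (b \<noteq> d))
                   + (\<Sum>b\<in>UNIV. ?P b) + (\<Sum>b\<in>UNIV. ?Q b)) / 2"
    by (simp add: sum.distrib sum_divide_distrib add_divide_distrib)
  also have "\<dots> = (\<Sum>b\<in>UNIV. ?P b) + (\<Sum>b\<in>UNIV. ?Q b)"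
    using sum_bool_neq[of ?P c] sum_bool_neq[of ?Q d] by simp
  finally show ?thesis .
qed

lemma norm_qinner_query_diff_le:
  "cmod (qinner n m (apply_op n m (query_op f) \<psi>) (apply_op n m (query_op g) \<phi>) - qinner n m \<psi> \<phi>)
     \<le> (\<Sum>x | x < 2 ^ n \<and> f x \<noteq> g x. query_mass m \<psi> x + query_mass m \<phi> x)"
proof -
  define E where "E x = (\<Sum>b\<in>UNIV. \<Sum>w<m.
      cnj (\<psi> (x, b \<noteq> f x, w)) * \<phi> (x, b \<noteq> g x, w) - cnj (\<psi> (x, b, w)) * \<phi> (x, b, w))" for x
  have "qinner n m (apply_op n m (query_op f) \<psi>) (apply_op n m (query_op g) \<phi>) - qinner n m \<psi> \<phi>
      = (\<Sum>x<2 ^ n. E x)"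
    unfolding qinner_def sum_basis_set E_def sum_subtractf[symmetric]
    by (intro sum.cong refl) (simp add: apply_query_op basis_set_def)
  moreover have "cmod (E x) \<le> (if f x \<noteq> g x then query_mass m \<psi> x + query_mass m \<phi> x else 0)" for x
    using sum_flip_diff_eq_0[where p = "\<lambda>b w. \<psi> (x, b, w)" and q = "\<lambda>b w. \<phi> (x, b, w)"
        and c = "g x"]
      norm_sum_flip_diff_le[where p = "\<lambda>b w. \<psi> (x, b, w)" and q = "\<lambda>b w. \<phi> (x, b, w)"
        and c = "f x" and d = "g x"]
    unfolding E_def query_mass_def by auto
  then have "cmod (\<Sum>x<2 ^ n. E x)
      \<le> (\<Sum>x<2 ^ n. if f x \<noteq> g x then query_mass m \<psi> x + query_mass m \<phi> x else 0)"
    by (intro order.trans[OF norm_sum] sum_mono)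
  ultimately show ?thesis
    by (simp add: sum.If_cases lessThan_def Collect_conj_eq Int_commute)
qed

lemma qinner_run_self:
  assumes "\<forall>k\<le>T. unitary_on (basis_set n m) (Us k)" "m \<ge> 1" "t \<le> T"
  shows "qinner n m (run n m Us f t) (run n m Us f t) = 1"
  using assms(3)
proof (induction t)
  case 0
  have "qinner n m init_state init_state = 1"
    using assms(2) unfolding qinner_def init_state_def
    by (simp add: if_distrib sum.delta' basis_set_def cong: if_cong)
  then show ?case
    using assms(1) by (simp add: qinner_apply_unitary)
next
  case (Suc t)
  then show ?case
    using assms(1) norm_qinner_query_diff_le[of n m f _ f] by (simp add: qinner_apply_unitary)
qed

lemma sum_norm_sq_run:
  assumes "\<forall>k\<le>T. unitary_on (basis_set n m) (Us k)" "m \<ge> 1" "t \<le> T"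
  shows "(\<Sum>s\<in>basis_set n m. (cmod (run n m Us f t s))\<^sup>2) = 1"
  using qinner_run_self[OF assms, of f] unfolding qinner_self of_real_eq_1_iff .

lemma norm_qinner_run_Suc_ge:
  assumes "\<forall>k\<le>T. unitary_on (basis_set n m) (Us k)" "Suc t \<le> T"
  shows "cmod (qinner n m (run n m Us f t) (run n m Us g t))
      - (\<Sum>x | x < 2 ^ n \<and> f x \<noteq> g x.
          query_mass m (run n m Us f t) x + query_mass m (run n m Us g t) x)
    \<le> cmod (qinner n m (run n m Us f (Suc t)) (run n m Us g (Suc t)))"
proof -
  let ?\<psi> = "run n m Us f t" and ?\<phi> = "run n m Us g t"
  have "qinner n m (run n m Us f (Suc t)) (run n m Us g (Suc t))
      = qinner n m (apply_op n m (query_op f) ?\<psi>) (apply_op n m (query_op g) ?\<phi>)"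
    using assms by (simp add: qinner_apply_unitary)
  moreover note norm_triangle_ineq2[of "qinner n m ?\<psi> ?\<phi>"
      "qinner n m (apply_op n m (query_op f) ?\<psi>) (apply_op n m (query_op g) ?\<phi>)"]
  ultimately show ?thesis
    using norm_qinner_query_diff_le[of n m f ?\<psi> g ?\<phi>] by (simp add: norm_minus_commute)
qed

lemma success_prob_eq:
  "success_prob n m Us out f T \<eta> lam
     = (\<Sum>s | s \<in> basis_set n m \<and> \<bar>out s - \<eta>\<bar> \<le> lam. (cmod (run n m Us f T s))\<^sup>2)"
  unfolding success_prob_def by (simp add: sum.inter_filter)

lemma norm_qinner_run_le_if_separated:
  assumes U: "\<forall>k\<le>T. unitary_on (basis_set n m) (Us k)" and m: "m \<ge> 1"
    and success: "\<forall>f. success_prob n m Us out f T (nonlinearity n f) lam \<ge> 2/3"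
    and gap: "2 * lam < \<bar>nonlinearity n f - nonlinearity n g\<bar>"
  shows "cmod (qinner n m (run n m Us f T) (run n m Us g T)) \<le> 17/18"
proof -
  let ?B = "basis_set n m"
  let ?accept = "\<lambda>h. {s. s \<in> ?B \<and> \<bar>out s - nonlinearity n h\<bar> \<le> lam}"
  have "?accept g \<subseteq> ?B - ?accept f"
    using gap by auto
  then have "(\<Sum>s\<in>?accept g. (cmod (run n m Us g T s))\<^sup>2)
      \<le> (\<Sum>s\<in>?B - ?accept f. (cmod (run n m Us g T s))\<^sup>2)"
    by (intro sum_mono2) auto
  then show ?thesis
    unfolding qinner_def
    using success[rule_format, of f] success[rule_format, of g]
    by (intro norm_sum_cnj_mult_le_if_separated[where A = "?accept f"])
      (simp_all add: success_prob_eq sum_norm_sq_run[OF U m])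
qed

section \<open>The adversary bound\<close>

lemma adversary_bound:
  fixes F G :: "'i \<Rightarrow> nat \<Rightarrow> bool" and \<delta> D :: real
  assumes U: "\<forall>k\<le>T. unitary_on (basis_set n m) (Us k)" and m: "m \<ge> 1"
    and final: "\<And>p. p \<in> R \<Longrightarrow> cmod (qinner n m (run n m Us (F p) T) (run n m Us (G p) T)) \<le> \<delta>"
    and step: "\<And>t. t < T \<Longrightarrow>
      (\<Sum>p\<in>R. \<Sum>x | x < 2 ^ n \<and> F p x \<noteq> G p x.
          query_mass m (run n m Us (F p) t) x + query_mass m (run n m Us (G p) t) x) \<le> D"
  shows "(1 - \<delta>) * card R \<le> T * D"
proof -
  define W where "W t = (\<Sum>p\<in>R. cmod (qinner n m (run n m Us (F p) t) (run n m Us (G p) t)))" for t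
  have W: "real (card R) - t * D \<le> W t" if "t \<le> T" for t
    using that
  proof (induction t)
    case 0
    have "qinner n m (run n m Us f 0) (run n m Us g 0) = 1" for f g
      using qinner_run_self[OF U m, of 0 f] by simp
    then show ?case
      unfolding W_def by simp
  next
    case (Suc t)
    let ?Q = "\<lambda>p. \<Sum>x | x < 2 ^ n \<and> F p x \<noteq> G p x.
        query_mass m (run n m Us (F p) t) x + query_mass m (run n m Us (G p) t) x"
    have "W t - D \<le> (\<Sum>p\<in>R. cmod (qinner n m (run n m Us (F p) t) (run n m Us (G p) t)) - ?Q p)"
      using step[of t] Suc.prems unfolding W_def sum_subtractf by simp
    also have "\<dots> \<le> W (Suc t)"
      unfolding W_def by (intro sum_mono norm_qinner_run_Suc_ge[OF U Suc.prems])
    finally have "W t - D \<le> W (Suc t)" .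
    then show ?case
      using Suc by (simp add: algebra_simps)
  qed
  have "W T \<le> (\<Sum>p\<in>R. \<delta>)"
    unfolding W_def using final by (rule sum_mono)
  then show ?thesis
    using W[OF order.refl] by (simp add: algebra_simps)
qed

section \<open>Indicators of residue classes\<close>

definition block_indicator :: "nat \<Rightarrow> nat set \<Rightarrow> nat \<Rightarrow> bool" where
  "block_indicator M S x \<longleftrightarrow> x mod M \<in> S"

lemma card_mod_in_less_mult:
  fixes M L :: nat
  assumes "0 < M" "S \<subseteq> {..<M}"
  shows "card {x. x < M * L \<and> x mod M \<in> S} = card S * L"
proof -
  have "bij_betw (\<lambda>(a, b). a + M * b) (S \<times> {..<L}) {x. x < M * L \<and> x mod M \<in> S}"
  proof (rule bij_betw_byWitness[where f' = "\<lambda>x. (x mod M, x div M)"])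
    have "a + M * b < M * L" if "a < M" "b < L" for a b
    proof -
      have "a + M * b < M * (b + 1)" using that by simp
      also have "\<dots> \<le> M * L" using that by (intro mult_le_mono2) simp
      finally show ?thesis .
    qed
    then show "(\<lambda>(a, b). a + M * b) ` (S \<times> {..<L}) \<subseteq> {x. x < M * L \<and> x mod M \<in> S}"
      using assms by auto
  qed (use assms in \<open>auto simp: div_less_iff_less_mult mult.commute\<close>)
  then show ?thesis
    by (simp add: bij_betw_same_card[symmetric] card_cartesian_product)
qed

lemma hamming_weight_block_indicator:
  assumes "r \<le> n" "S \<subseteq> {..<2 ^ r}"
  shows "hamming_weight n (block_indicator (2 ^ r) S) = card S * 2 ^ (n - r)"
proof -
  have "(2::nat) ^ n = 2 ^ r * 2 ^ (n - r)"
    using assms(1) by (simp flip: power_add)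
  then show ?thesis
    unfolding hamming_weight_def block_indicator_def
    using card_mod_in_less_mult[OF _ assms(2)] by simp
qed

lemma nonlinearity_block_indicator:
  assumes "r \<le> n" "S \<subseteq> {..<2 ^ r}" "4 * card S \<le> 2 ^ r"
  shows "nonlinearity n (block_indicator (2 ^ r) S) = card S / 2 ^ r"
proof -
  have n: "(2::nat) ^ n = 2 ^ r * 2 ^ (n - r)" and n_real: "(2::real) ^ n = 2 ^ r * 2 ^ (n - r)"
    using assms(1) by (simp_all flip: power_add)
  have "4 * hamming_weight n (block_indicator (2 ^ r) S) \<le> 2 ^ n"
    unfolding hamming_weight_block_indicator[OF assms(1,2)] n using assms(3) by simp
  then have "nonlinearity n (block_indicator (2 ^ r) S)
      = real (hamming_weight n (block_indicator (2 ^ r) S)) / 2 ^ n"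
    by (rule nonlinearity_eq_weight)
  also have "\<dots> = card S / 2 ^ r"
    unfolding hamming_weight_block_indicator[OF assms(1,2)] n_real by simp
  finally show ?thesis .
qed

lemma sum_mod_classes:
  fixes h :: "nat \<Rightarrow> 'a :: comm_monoid_add"
  assumes "0 < M"
  shows "(\<Sum>z<M. \<Sum>x | x < N \<and> x mod M = z. h x) = (\<Sum>x<N. h x)"
proof -
  have "(\<lambda>x. x mod M) ` {..<N} \<subseteq> {..<M}"
    using assms by auto
  then show ?thesis
    using sum.group[of "{..<N}" "{..<M}" "\<lambda>x. x mod M" h] by simp
qed

section \<open>Pairs of sets differing in one point\<close>

definition subsets_of_card :: "'a set \<Rightarrow> nat \<Rightarrow> 'a set set" where
  "subsets_of_card A k = {S. S \<subseteq> A \<and> card S = k}"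

lemma finite_subsets_of_card [simp]: "finite A \<Longrightarrow> finite (subsets_of_card A k)"
  unfolding subsets_of_card_def by (rule finite_subset[of _ "Pow A"]) auto

lemma bij_betw_insert_pairs:
  assumes "finite A"
  shows "bij_betw (\<lambda>(S, z). (insert z S, z))
    (SIGMA S:subsets_of_card A k. A - S) (SIGMA S:subsets_of_card A (Suc k). S)"
proof (rule bij_betw_byWitness[where f' = "\<lambda>(S, z). (S - {z}, z)"])
  have "finite S" if "S \<subseteq> A" for S
    using assms that by (rule finite_subset[rotated])
  then show "(\<lambda>(S, z). (insert z S, z)) ` (SIGMA S:subsets_of_card A k. A - S)
      \<subseteq> (SIGMA S:subsets_of_card A (Suc k). S)"
    and "(\<lambda>(S, z). (S - {z}, z)) ` (SIGMA S:subsets_of_card A (Suc k). S)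
      \<subseteq> (SIGMA S:subsets_of_card A k. A - S)"
    by (auto simp: subsets_of_card_def)
qed (auto simp: subsets_of_card_def)

lemma card_insert_pairs:
  assumes "finite A"
  shows "card (SIGMA S:subsets_of_card A k. A - S) = card (subsets_of_card A k) * (card A - k)"
    and "card (SIGMA S:subsets_of_card A k. A - S) = card (subsets_of_card A (Suc k)) * Suc k"
proof -
  have "finite S" if "S \<in> subsets_of_card A j" for S j
    using assms that unfolding subsets_of_card_def by (auto intro: finite_subset)
  then show "card (SIGMA S:subsets_of_card A k. A - S) = card (subsets_of_card A k) * (card A - k)"
    and "card (SIGMA S:subsets_of_card A k. A - S) = card (subsets_of_card A (Suc k)) * Suc k"
    using assms bij_betw_same_card[OF bij_betw_insert_pairs[OF assms, of k]]
    by (simp_all add: card_Diff_subset subsets_of_card_def)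
qed

lemma card_insert_pairs_bounds:
  assumes "finite A" "2 * (k + 1) \<le> card A"
  shows "0 < card (SIGMA S:subsets_of_card A k. A - S)"
    and "(card (subsets_of_card A k) + card (subsets_of_card A (Suc k))) * (k + 1)
      \<le> 2 * card (SIGMA S:subsets_of_card A k. A - S)"
proof -
  obtain S where "S \<subseteq> A" "card S = k"
    using obtain_subset_with_card_n[of k A] assms(2) by auto
  then have "card (subsets_of_card A k) > 0"
    using assms(1) by (auto simp: card_gt_0_iff subsets_of_card_def)
  moreover have "k + 1 \<le> card A - k"
    using assms(2) by simp
  ultimately have "0 < card (SIGMA S:subsets_of_card A k. A - S)"
    and "card (subsets_of_card A k) * (k + 1) \<le> card (SIGMA S:subsets_of_card A k. A - S)"
    unfolding card_insert_pairs(1)[OF assms(1)] by (simp_all only: mult_le_mono2) simp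
  moreover have
    "card (subsets_of_card A (Suc k)) * (k + 1) = card (SIGMA S:subsets_of_card A k. A - S)"
    using card_insert_pairs(2)[OF assms(1), of k] by (simp del: card_SigmaI)
  ultimately show "0 < card (SIGMA S:subsets_of_card A k. A - S)"
    and "(card (subsets_of_card A k) + card (subsets_of_card A (Suc k))) * (k + 1)
      \<le> 2 * card (SIGMA S:subsets_of_card A k. A - S)"
    unfolding add_mult_distrib by linarith+
qed

lemma sum_Sigma_le_card:
  fixes q :: "'a \<Rightarrow> 'b \<Rightarrow> real"
  assumes "finite X" "finite A" "\<And>S. S \<in> X \<Longrightarrow> Z S \<subseteq> A"
    and "\<And>S z. 0 \<le> q S z" "\<And>S. S \<in> X \<Longrightarrow> (\<Sum>z\<in>A. q S z) \<le> 1"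
  shows "(\<Sum>(S, z)\<in>Sigma X Z. q S z) \<le> card X"
proof -
  have "(\<Sum>(S, z)\<in>Sigma X Z. q S z) = (\<Sum>S\<in>X. \<Sum>z\<in>Z S. q S z)"
    using assms(1-3) by (subst sum.Sigma) (auto intro: finite_subset)
  also have "\<dots> \<le> (\<Sum>S\<in>X. \<Sum>z\<in>A. q S z)"
    using assms by (intro sum_mono sum_mono2) auto
  also have "\<dots> \<le> (\<Sum>S\<in>X. 1)"
    using assms(5) by (rule sum_mono)
  finally show ?thesis
    by simp
qed

lemma sum_insert_pairs_le:
  fixes q :: "'a set \<Rightarrow> 'a \<Rightarrow> real"
  assumes "finite A" "\<And>S z. 0 \<le> q S z" "\<And>S. (\<Sum>z\<in>A. q S z) \<le> 1"
  shows "(\<Sum>(S, z)\<in>(SIGMA S:subsets_of_card A k. A - S). q S z + q (insert z S) z)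
    \<le> card (subsets_of_card A k) + card (subsets_of_card A (Suc k))"
proof -
  have "(\<Sum>(S, z)\<in>(SIGMA S:subsets_of_card A k. A - S). q S z + q (insert z S) z)
      = (\<Sum>(S, z)\<in>(SIGMA S:subsets_of_card A k. A - S). q S z)
        + (\<Sum>(S, z)\<in>(SIGMA S:subsets_of_card A (Suc k). S). q S z)"
    using sum.reindex_bij_betw[OF bij_betw_insert_pairs[OF assms(1)], of "\<lambda>(S, z). q S z"]
    by (simp only: split_def sum.distrib prod.sel)
  also have "\<dots> \<le> card (subsets_of_card A k) + card (subsets_of_card A (Suc k))"
    unfolding of_nat_add using assms
    by (intro add_mono sum_Sigma_le_card) (auto simp: subsets_of_card_def)
  finally show ?thesis .
qed

lemma query_mass_block_pairs_le:
  assumes U: "\<forall>k\<le>T. unitary_on (basis_set n m) (Us k)" and m: "m \<ge> 1" and "t \<le> T" "0 < M"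
  shows "(\<Sum>(S, z)\<in>(SIGMA S:subsets_of_card {..<M} k. {..<M} - S).
      \<Sum>x | x < 2 ^ n \<and> block_indicator M S x \<noteq> block_indicator M (insert z S) x.
        query_mass m (run n m Us (block_indicator M S) t) x
        + query_mass m (run n m Us (block_indicator M (insert z S)) t) x)
    \<le> card (subsets_of_card {..<M} k) + card (subsets_of_card {..<M} (Suc k))"
proof -
  define q where
    "q S z = (\<Sum>x | x < 2 ^ n \<and> x mod M = z. query_mass m (run n m Us (block_indicator M S) t) x)"
    for S z
  have "(\<Sum>z<M. q S z) = 1" for S
    unfolding q_def sum_mod_classes[OF \<open>0 < M\<close>] sum_query_mass
    using sum_norm_sq_run[OF U m \<open>t \<le> T\<close>] .
  then have bound:
    "(\<Sum>(S, z)\<in>(SIGMA S:subsets_of_card {..<M} k. {..<M} - S). q S z + q (insert z S) z)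
      \<le> card (subsets_of_card {..<M} k) + card (subsets_of_card {..<M} (Suc k))"
    by (intro sum_insert_pairs_le) (simp_all add: q_def sum_nonneg query_mass_nonneg)
  have "(\<Sum>(S, z)\<in>(SIGMA S:subsets_of_card {..<M} k. {..<M} - S).
      \<Sum>x | x < 2 ^ n \<and> block_indicator M S x \<noteq> block_indicator M (insert z S) x.
        query_mass m (run n m Us (block_indicator M S) t) x
        + query_mass m (run n m Us (block_indicator M (insert z S)) t) x)
    = (\<Sum>(S, z)\<in>(SIGMA S:subsets_of_card {..<M} k. {..<M} - S). q S z + q (insert z S) z)"
    by (intro sum.cong refl)
      (auto simp: q_def sum.distrib block_indicator_def intro!: arg_cong2[where f = "(+)"] sum.cong)
  then show ?thesis
    using bound by simp
qed

lemma norm_qinner_run_block_indicator_le: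
  fixes lam :: real
  assumes U: "\<forall>k\<le>T. unitary_on (basis_set n m) (Us k)" and m: "m \<ge> 1"
    and success: "\<forall>f. success_prob n m Us out f T (nonlinearity n f) lam \<ge> 2/3"
    and "r \<le> n" "S \<subseteq> {..<2 ^ r}" "z < 2 ^ r" "z \<notin> S" "4 * (card S + 1) \<le> 2 ^ r"
    and "2 * lam < 1 / 2 ^ r"
  shows "cmod (qinner n m (run n m Us (block_indicator (2 ^ r) S) T)
    (run n m Us (block_indicator (2 ^ r) (insert z S)) T)) \<le> 17/18"
proof -
  have "finite S"
    using assms(5) by (rule finite_subset) simp
  then have "nonlinearity n (block_indicator (2 ^ r) S) = card S / 2 ^ r"
    and "nonlinearity n (block_indicator (2 ^ r) (insert z S)) = (card S + 1) / 2 ^ r"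
    using nonlinearity_block_indicator[OF \<open>r \<le> n\<close>] assms(5-8) by auto
  then have "\<bar>nonlinearity n (block_indicator (2 ^ r) S)
      - nonlinearity n (block_indicator (2 ^ r) (insert z S))\<bar> = 1 / 2 ^ r"
    by (simp add: diff_divide_distrib[symmetric])
  then show ?thesis
    using assms(9) by (intro norm_qinner_run_le_if_separated[OF U m success]) simp
qed

lemma block_counting_lower_bound:
  fixes lam :: real
  assumes U: "\<forall>k\<le>T. unitary_on (basis_set n m) (Us k)" and m: "m \<ge> 1"
    and success: "\<forall>f. success_prob n m Us out f T (nonlinearity n f) lam \<ge> 2/3"
    and "r \<le> n" and k: "4 * (k + 1) \<le> (2::nat) ^ r" and lam: "2 * lam < 1 / 2 ^ r"
  shows "real (k + 1) \<le> 36 * real T"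
proof -
  define M :: nat where "M = 2 ^ r"
  let ?X = "subsets_of_card {..<M} k"
  let ?Y = "subsets_of_card {..<M} (Suc k)"
  let ?R = "SIGMA S:?X. {..<M} - S"
  have "(1 - 17/18) * card ?R \<le> real T * real (card ?X + card ?Y)"
  proof (rule adversary_bound[OF U m, where F = "\<lambda>(S, z). block_indicator M S"
        and G = "\<lambda>(S, z). block_indicator M (insert z S)"])
    fix p
    assume "p \<in> ?R"
    then show "cmod (qinner n m (run n m Us ((\<lambda>(S, z). block_indicator M S) p) T)
        (run n m Us ((\<lambda>(S, z). block_indicator M (insert z S)) p) T)) \<le> 17/18"
      using norm_qinner_run_block_indicator_le[OF U m success \<open>r \<le> n\<close> _ _ _ _ lam] k
      unfolding M_def by (auto simp: subsets_of_card_def)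
  next
    fix t
    assume "t < T"
    then show "(\<Sum>p\<in>?R. \<Sum>x | x < 2 ^ n \<and> (\<lambda>(S, z). block_indicator M S) p x
                                    \<noteq> (\<lambda>(S, z). block_indicator M (insert z S)) p x.
        query_mass m (run n m Us ((\<lambda>(S, z). block_indicator M S) p) t) x
        + query_mass m (run n m Us ((\<lambda>(S, z). block_indicator M (insert z S)) p) t) x)
      \<le> real (card ?X + card ?Y)"
      using query_mass_block_pairs_le[OF U m, of t M k] unfolding M_def by (simp add: split_def)
  qed
  moreover have "0 < card ?R" and "(card ?X + card ?Y) * (k + 1) \<le> 2 * card ?R"
    using k unfolding M_def by (intro card_insert_pairs_bounds; simp)+
  ultimately have "real (card ?R) * (k + 1) \<le> 18 * (T * real (card ?X + card ?Y)) * (k + 1)"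
    by (intro mult_right_mono) simp_all
  also have "\<dots> = 18 * T * real ((card ?X + card ?Y) * (k + 1))"
    by (simp add: algebra_simps)
  also have "\<dots> \<le> 18 * T * real (2 * card ?R)"
    using \<open>(card ?X + card ?Y) * (k + 1) \<le> 2 * card ?R\<close>
    by (intro mult_left_mono of_nat_mono) simp_all
  finally have "real (card ?R) * (k + 1) \<le> real (card ?R) * (36 * T)"
    by (simp del: card_SigmaI add: mult_ac)
  then show ?thesis
    using \<open>0 < card ?R\<close> by (simp del: card_SigmaI)
qed

lemma ex_power2_bracket:
  fixes y :: real
  assumes "1 \<le> y"
  shows "\<exists>r. 2 ^ r \<le> y \<and> y < 2 ^ (r + 1)"
proof -
  obtain j where "y < 2 ^ j"
    using real_arch_pow[of 2 y] by auto
  then show ?thesis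
  proof (induction j)
    case 0
    with assms show ?case by simp
  next
    case (Suc j)
    then show ?case
      by (cases "y < 2 ^ j") (auto simp del: power_Suc intro: exI[of _ j])
  qed
qed

lemma nonlinearity_query_lower_bound:
  fixes lam :: real
  assumes U: "\<forall>k\<le>T. unitary_on (basis_set n m) (Us k)" and m: "m \<ge> 1"
    and success: "\<forall>f. success_prob n m Us out f T (nonlinearity n f) lam \<ge> 2/3"
    and "r + 2 \<le> n" "0 < lam" "16 * lam * 2 ^ r \<le> 1" "1 < 32 * lam * 2 ^ r"
  shows "1/1152 / lam \<le> real T"
proof -
  have "2 * lam < 1 / 2 ^ (r + 2)"
    using assms(5,6) by (simp add: field_simps)
  then have "real (2 ^ r - 1 + 1) \<le> 36 * real T"
    by (intro block_counting_lower_bound[OF U m success \<open>r + 2 \<le> n\<close>]) simp_all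
  then have "32 * lam * 2 ^ r \<le> 32 * lam * (36 * real T)"
    using assms(5) by (intro mult_left_mono) simp_all
  then have "1 < 32 * lam * (36 * real T)"
    using assms(7) by linarith
  then show ?thesis
    using assms(5) by (simp add: field_simps)
qed

theorem lemma6:
  shows "\<exists>c > 0. \<exists>lam0 > 0. \<forall>lam. 0 < lam \<and> lam < lam0 \<longrightarrow>
     (\<exists>N. \<forall>n \<ge> N. \<forall>m \<ge> 1. \<forall>T. \<forall>(Us :: nat \<Rightarrow> qop). \<forall>(out :: qbasis \<Rightarrow> real).
        (\<forall>k \<le> T. unitary_on (basis_set n m) (Us k)) \<and>
        (\<forall>f. success_prob n m Us out f T (nonlinearity n f) lam \<ge> 2/3)
        \<longrightarrow> real T \<ge> c / lam)"
proof (rule exI[of _ "1/1152"], intro conjI exI[of _ "1/16 :: real"] allI impI)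
  fix lam :: real
  assume lam: "0 < lam \<and> lam < 1/16"
  then obtain r where "2 ^ r \<le> 1 / (16 * lam)" "1 / (16 * lam) < 2 ^ (r + 1)"
    using ex_power2_bracket[of "1 / (16 * lam)"] by (auto simp: field_simps)
  with lam have r: "16 * lam * 2 ^ r \<le> 1" "1 < 32 * lam * 2 ^ r"
    by (simp_all add: field_simps)
  show "\<exists>N. \<forall>n \<ge> N. \<forall>m \<ge> 1. \<forall>T. \<forall>(Us :: nat \<Rightarrow> qop). \<forall>(out :: qbasis \<Rightarrow> real).
        (\<forall>k \<le> T. unitary_on (basis_set n m) (Us k)) \<and>
        (\<forall>f. success_prob n m Us out f T (nonlinearity n f) lam \<ge> 2/3)
        \<longrightarrow> real T \<ge> 1/1152 / lam"
    using nonlinearity_query_lower_bound[OF _ _ _ _ _ r] lam by (intro exI[of _ "r + 2"]) auto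
qed simp_all

end
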